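(* Let $m,n\geq 2$. There does not exist a Borel-Turing computable function $G:\mathbb{C}^{m\times n}\to\mathbb{C}^{n\times m}$ such that, setting $A_0=G(A)$ and $A_k=2A_{k-1}-A_{k-1}AA_{k-1}$ for $k\in\mathbb{N}$, the sequence $(A_k)_{k}$ converges effectively to $A^\dagger$, i.e., such that there exists a recursive function $e:\mathbb{N}\to\mathbb{N}$ with $\|A^\dagger-A_k\|_2\le 2^{-N}$ for every (computable) $A\in\mathbb{C}^{m\times n}$, every $N\in\mathbb{N}$ and every $k\ge e(N)$.
   Context: $A^\dagger\in\mathbb{C}^{n\times m}$ is the Moore–Penrose pseudoinverse of $A\in\mathbb{C}^{m\times n}$ (the unique matrix with $AA^\dagger A=A$, $A^\dagger AA^\dagger=A^\dagger$, $(AA^\dagger)^H=AA^\dagger$, $(A^\dagger A)^H=A^\dagger A$); $\|\cdot\|_2$ is the spectral norm. A real number $x$ is computable if there is a sequence $r_k=(-1)^{s(k)}a(k)/b(k)$ with recursive $a,b,s$, $b(k)\ne0$, such that $|r_k-x|\le2^{-k}$ for all $k$; such a sequence is a representation of $x$. Complex numbers/matrices are computable if the real and imaginary parts of all entries are; a representation of such an object consists of representations of these parts. A function $G$ defined on computable inputs with computable outputs is Borel-Turing computable if there is a Turing machine that transforms each representation of any input $x$ into a representation of $G(x)$. *)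

theory Defs
  imports "HOL-Analysis.Analysis" "HOL-Library.Countable"
begin

section \<open>Oracle mu-recursive functions (model of Turing machines with input tape)\<close>

datatype rf = Zr | Sc | Proj nat | Comp rf "rf list" | Prim rf rf | Mn rf | Orc

definition arg :: "nat list \<Rightarrow> nat \<Rightarrow> nat" where
  "arg xs i = (if i < length xs then xs ! i else 0)"

inductive eval :: "(nat \<Rightarrow> nat) \<Rightarrow> rf \<Rightarrow> nat list \<Rightarrow> nat \<Rightarrow> bool" for f where
  ev_zero: "eval f Zr xs 0"
| ev_succ: "eval f Sc xs (Suc (arg xs 0))"
| ev_proj: "eval f (Proj i) xs (arg xs i)"
| ev_orc:  "eval f Orc xs (f (arg xs 0))"
| ev_comp: "length ys = length hs \<Longrightarrow> (\<forall>i<length hs. eval f (hs ! i) xs (ys ! i))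
            \<Longrightarrow> eval f g ys z \<Longrightarrow> eval f (Comp g hs) xs z"
| ev_prim0: "eval f g xs y \<Longrightarrow> eval f (Prim g h) (0 # xs) y"
| ev_primS: "eval f (Prim g h) (n # xs) y \<Longrightarrow> eval f h (n # y # xs) z
            \<Longrightarrow> eval f (Prim g h) (Suc n # xs) z"
| ev_mn: "eval f g (n # xs) 0 \<Longrightarrow> (\<forall>m<n. \<exists>y. eval f g (m # xs) y \<and> y \<noteq> 0)
            \<Longrightarrow> eval f (Mn g) xs n"

fun no_orc :: "rf \<Rightarrow> bool" where
  "no_orc Orc = False"
| "no_orc (Comp g hs) = (no_orc g \<and> (\<forall>h\<in>set hs. no_orc h))"
| "no_orc (Prim g h) = (no_orc g \<and> no_orc h)"
| "no_orc (Mn g) = no_orc g"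
| "no_orc _ = True"

definition recursive :: "(nat \<Rightarrow> nat) \<Rightarrow> bool" where
  "recursive e \<longleftrightarrow> (\<exists>p. no_orc p \<and> (\<forall>x. eval (\<lambda>_. 0) p [x] (e x)))"

definition rep_real :: "(nat \<Rightarrow> nat) \<Rightarrow> (nat \<Rightarrow> nat) \<Rightarrow> (nat \<Rightarrow> nat) \<Rightarrow> real \<Rightarrow> bool" where
  "rep_real a b s x \<longleftrightarrow> recursive a \<and> recursive b \<and> recursive s \<and> (\<forall>k. b k \<noteq> 0) \<and>
     (\<forall>k. \<bar>(-1) ^ s k * real (a k) / real (b k) - x\<bar> \<le> 2 powr (- real k))"

text \<open>Encoding of a representation of a matrix as one sequence (input tape):
  position  prod_encode (c, prod_encode (k, prod_encode (prod_encode (to_nat i, to_nat j), ri)))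
  holds the k-th term of component c (0 = a, 1 = b, 2 = s) of the representation of the
  real part (ri = 0) resp. imaginary part (ri = 1) of entry (i,j).\<close>
definition tape_pos :: "nat \<Rightarrow> nat \<Rightarrow> 'i::countable \<Rightarrow> 'j::countable \<Rightarrow> nat \<Rightarrow> nat" where
  "tape_pos c k i j ri = prod_encode (c, prod_encode (k, prod_encode (prod_encode (to_nat i, to_nat j), ri)))"

definition rep_mat :: "(nat \<Rightarrow> nat) \<Rightarrow> complex ^ 'c::finite ^ 'r::finite \<Rightarrow> bool" where
  "rep_mat f A \<longleftrightarrow> (\<forall>i j.
      rep_real (\<lambda>k. f (tape_pos 0 k i j 0)) (\<lambda>k. f (tape_pos 1 k i j 0)) (\<lambda>k. f (tape_pos 2 k i j 0))
               (Re (A $ i $ j)) \<and>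
      rep_real (\<lambda>k. f (tape_pos 0 k i j 1)) (\<lambda>k. f (tape_pos 1 k i j 1)) (\<lambda>k. f (tape_pos 2 k i j 1))
               (Im (A $ i $ j)))"

definition computable_mat :: "complex ^ 'c::finite ^ 'r::finite \<Rightarrow> bool" where
  "computable_mat A \<longleftrightarrow> (\<exists>f. rep_mat f A)"

definition BT_computable :: "(complex ^ 'n::finite ^ 'm::finite \<Rightarrow> complex ^ 'q::finite ^ 'p::finite) \<Rightarrow> bool" where
  "BT_computable G \<longleftrightarrow> (\<exists>p. \<forall>A f. rep_mat f A \<longrightarrow>
      (\<exists>g. (\<forall>x. eval f p [x] (g x)) \<and> rep_mat g (G A)))"

definition conj_transpose :: "complex ^ 'n ^ 'm \<Rightarrow> complex ^ 'm ^ 'n" where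
  "conj_transpose A = (\<chi> i j. cnj (A $ j $ i))"

definition pinv :: "complex ^ 'n::finite ^ 'm::finite \<Rightarrow> complex ^ 'm ^ 'n" where
  "pinv A = (THE X. A ** X ** A = A \<and> X ** A ** X = X \<and>
                    conj_transpose (A ** X) = A ** X \<and> conj_transpose (X ** A) = X ** A)"

definition spec_norm :: "complex ^ 'n::finite ^ 'm::finite \<Rightarrow> real" where
  "spec_norm A = onorm (\<lambda>x. A *v x)"

definition newton_iter :: "complex ^ 'n::finite ^ 'm::finite \<Rightarrow> complex ^ 'm ^ 'n \<Rightarrow> nat \<Rightarrow> complex ^ 'm ^ 'n" where
  "newton_iter A X0 k = ((\<lambda>X. X + X - X ** A ** X) ^^ k) X0"

end

theory Submission
  imports Defs
begin

(* A Borel-Turing machine reads only finitely many tape positions before it writes any output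
   symbol. Hence, if the tapes of inputs A_M agree with the tape of A on longer and longer
   prefixes, the outputs G(A_M) converge to G(A). The matrices A_M = 2^-M E_ij have such tapes
   converging to a tape of 0, so G(A_M) tends to G(0); as the first e(0) Newton-Schulz steps
   depend continuously on A and on the starting matrix, the e(0)-th iterates stay bounded.
   But the pseudoinverse 2^M E_ji of A_M is unbounded, contradicting the 2^0 accuracy bound. *)

lemma eval_deterministic:
  assumes "eval f p xs y" and "eval f p xs y'"
  shows "y' = y"
  using assms
proof (induction arbitrary: y' rule: eval.induct)
  case (ev_comp ys hs xs g z)
  from ev_comp.prems obtain ys' where ys': "length ys' = length hs"
    "\<forall>i<length hs. eval f (hs ! i) xs (ys' ! i)" "eval f g ys' y'"
    by (cases rule: eval.cases) auto
  have "ys' = ys"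
    using ys' ev_comp.IH ev_comp.hyps by (auto intro: nth_equalityI)
  then show ?case using ys' ev_comp.IH by auto
next
  case (ev_prim0 g xs y h)
  from ev_prim0.prems show ?case
    by (cases rule: eval.cases) (auto simp: ev_prim0.IH)
next
  case (ev_primS g h n xs y z)
  from ev_primS.prems obtain y1 where "eval f (Prim g h) (n # xs) y1" "eval f h (n # y1 # xs) y'"
    by (cases rule: eval.cases) auto
  then show ?case using ev_primS.IH by auto
next
  case (ev_mn g n xs)
  from ev_mn.prems have zero: "eval f g (y' # xs) 0"
    and nonzero: "\<forall>m<y'. \<exists>y. eval f g (m # xs) y \<and> y \<noteq> 0"
    by (cases rule: eval.cases; auto)+
  have "\<not> y' < n" using ev_mn.IH(2) zero by fastforce
  moreover have "\<not> n < y'" using nonzero ev_mn.IH(1) by fastforce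
  ultimately show ?case by simp
qed (auto elim: eval.cases)

lemma eval_continuous_in_oracle:
  assumes "eval f p xs y" and agree: "\<And>z. eventually (\<lambda>t. g t z = f z) F"
  shows "eventually (\<lambda>t. eval (g t) p xs y) F"
  using assms(1)
proof (induction rule: eval.induct)
  case (ev_orc xs)
  from agree[of "arg xs 0"] show ?case by eventually_elim (metis eval.ev_orc)
next
  case (ev_comp ys hs xs h z)
  have "eventually (\<lambda>t. \<forall>i\<in>{..<length hs}. eval (g t) (hs ! i) xs (ys ! i)) F"
    using ev_comp.IH(1) by (intro eventually_ball_finite) auto
  with ev_comp.IH(2) show ?case
    by eventually_elim (use ev_comp.hyps(1) in \<open>auto intro: eval.ev_comp\<close>)
next
  case (ev_prim0 h xs y k)
  then show ?case by (auto elim: eventually_mono intro: eval.ev_prim0)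
next
  case (ev_primS h k n xs y z)
  from ev_primS.IH show ?case by eventually_elim (rule eval.ev_primS)
next
  case (ev_mn h n xs)
  have "eventually (\<lambda>t. \<forall>m\<in>{..<n}. \<exists>y. eval (g t) h (m # xs) y \<and> y \<noteq> 0) F"
  proof (intro eventually_ball_finite ballI)
    fix m assume "m \<in> {..<n}"
    then obtain y where "y \<noteq> 0" "eventually (\<lambda>t. eval (g t) h (m # xs) y) F"
      using ev_mn.IH(2) by blast
    then show "eventually (\<lambda>t. \<exists>y. eval (g t) h (m # xs) y \<and> y \<noteq> 0) F"
      by (auto elim!: eventually_mono)
  qed simp
  with ev_mn.IH(1) show ?case
    by eventually_elim (auto intro: eval.ev_mn)
qed (simp_all add: eval.intros)

fun const_prog :: "nat \<Rightarrow> rf" where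
  "const_prog 0 = Zr"
| "const_prog (Suc c) = Comp Sc [const_prog c]"

lemma eval_const_prog: "eval f (const_prog c) xs c"
proof (induction c)
  case (Suc c)
  have "eval f Sc [c] (Suc c)" using eval.ev_succ[of f "[c]"] by (simp add: arg_def)
  with Suc show ?case by (auto intro!: eval.ev_comp[where ys="[c]"])
qed (simp add: eval.ev_zero)

lemma no_orc_const_prog: "no_orc (const_prog c)"
  by (induction c) auto

definition pred_prog :: rf where
  "pred_prog = Prim Zr (Proj 0)"

lemma eval_pred_prog: "eval f pred_prog [k] (k - 1)"
proof (induction k)
  case (Suc k)
  have "eval f (Proj 0) [k, k - 1] k" using eval.ev_proj[of f 0 "[k, k - 1]"] by (simp add: arg_def)
  with Suc show ?case unfolding pred_prog_def by (auto intro: eval.ev_primS)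
qed (auto simp: pred_prog_def intro: eval.intros)

fun minus_prog :: "nat \<Rightarrow> rf" where
  "minus_prog 0 = Proj 0"
| "minus_prog (Suc M) = Comp pred_prog [minus_prog M]"

lemma eval_minus_prog: "eval f (minus_prog M) [k] (k - M)"
proof (induction M)
  case 0
  show ?case using eval.ev_proj[of f 0 "[k]"] by (simp add: arg_def)
next
  case (Suc M)
  have "eval f pred_prog [k - M] (k - Suc M)" using eval_pred_prog[of f "k - M"] by simp
  with Suc show ?case by (auto intro!: eval.ev_comp[where ys="[k - M]"])
qed

lemma no_orc_minus_prog: "no_orc (minus_prog M)"
  by (induction M) (auto simp: pred_prog_def)

lemma eval_if_zero_prog:
  "eval f (Prim (const_prog c1) (const_prog c2)) [d] (if d = 0 then c1 else c2)"
  by (induction d) (auto intro: eval.intros eval_const_prog)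

lemma recursive_const: "recursive (\<lambda>k. c)"
  unfolding recursive_def using eval_const_prog no_orc_const_prog by blast

lemma recursive_step: "recursive (\<lambda>k. if M < k then c2 else c1)"
  unfolding recursive_def
proof (intro exI conjI allI)
  show "no_orc (Comp (Prim (const_prog c1) (const_prog c2)) [minus_prog M])"
    by (simp add: no_orc_const_prog no_orc_minus_prog)
  fix x
  have "eval (\<lambda>_. 0) (Prim (const_prog c1) (const_prog c2)) [x - M] (if M < x then c2 else c1)"
    using eval_if_zero_prog[of "\<lambda>_. 0" c1 c2 "x - M"] by (simp split: if_splits)
  then show "eval (\<lambda>_. 0) (Comp (Prim (const_prog c1) (const_prog c2)) [minus_prog M]) [x]
      (if M < x then c2 else c1)"
    using eval_minus_prog[of "\<lambda>_. 0" M x] by (auto intro!: eval.ev_comp[where ys="[x - M]"])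
qed

lemma two_powr_minus_nat: "2 powr - real k = (1 / 2) ^ k"
  by (simp add: powr_minus powr_realpow power_one_over inverse_eq_divide)

lemma rep_real_tendsto:
  assumes rep: "\<And>t. rep_real (a t) (b t) (s t) (x t)" and rep0: "rep_real a0 b0 s0 x0"
    and agree: "\<And>k. eventually (\<lambda>t. a t k = a0 k \<and> b t k = b0 k \<and> s t k = s0 k) F"
  shows "(x \<longlongrightarrow> x0) F"
proof (rule tendstoI)
  fix \<epsilon> :: real assume "0 < \<epsilon>"
  then obtain L where L: "(1 / 2 :: real) ^ L < \<epsilon> / 2"
    using real_arch_pow_inv[of "\<epsilon> / 2" "1 / 2 :: real"] by auto
  let ?q = "(-1) ^ s0 L * real (a0 L) / real (b0 L)"
  have q0: "\<bar>?q - x0\<bar> \<le> (1 / 2) ^ L"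
    using rep0 by (simp add: rep_real_def two_powr_minus_nat)
  from agree[of L] show "eventually (\<lambda>t. dist (x t) x0 < \<epsilon>) F"
  proof eventually_elim
    case (elim t)
    have "\<bar>(-1) ^ s t L * real (a t L) / real (b t L) - x t\<bar> \<le> (1 / 2) ^ L"
      using rep[of t] by (simp add: rep_real_def two_powr_minus_nat)
    with elim have "\<bar>?q - x t\<bar> \<le> (1 / 2) ^ L" by simp
    with q0 L show ?case by (simp add: dist_real_def)
  qed
qed

lemma rep_mat_tendsto:
  fixes A :: "'t \<Rightarrow> complex ^ 'c::finite ^ 'r::finite"
  assumes rep: "\<And>t. rep_mat (f t) (A t)" and rep0: "rep_mat f0 A0"
    and agree: "\<And>x. eventually (\<lambda>t. f t x = f0 x) F"
  shows "(A \<longlongrightarrow> A0) F"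
proof (rule vec_tendstoI, rule vec_tendstoI)
  fix i :: 'r and j :: 'c
  have agree_entry: "eventually (\<lambda>t. f t (tape_pos 0 k i j ri) = f0 (tape_pos 0 k i j ri) \<and>
      f t (tape_pos 1 k i j ri) = f0 (tape_pos 1 k i j ri) \<and>
      f t (tape_pos 2 k i j ri) = f0 (tape_pos 2 k i j ri)) F" for k ri
    by (intro eventually_conj agree)
  have "((\<lambda>t. Re (A t $ i $ j)) \<longlongrightarrow> Re (A0 $ i $ j)) F"
    using rep rep0 agree_entry unfolding rep_mat_def by (intro rep_real_tendsto) blast+
  moreover have "((\<lambda>t. Im (A t $ i $ j)) \<longlongrightarrow> Im (A0 $ i $ j)) F"
    using rep rep0 agree_entry unfolding rep_mat_def by (intro rep_real_tendsto) blast+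
  ultimately show "((\<lambda>t. A t $ i $ j) \<longlongrightarrow> A0 $ i $ j) F"
    by (simp add: tendsto_complex_iff)
qed

lemma BT_computable_tendsto:
  assumes "BT_computable G"
    and rep: "\<And>t. rep_mat (f t) (A t)" and rep0: "rep_mat f0 A0"
    and agree: "\<And>x. eventually (\<lambda>t. f t x = f0 x) F"
  shows "((\<lambda>t. G (A t)) \<longlongrightarrow> G A0) F"
proof -
  obtain p where p: "\<And>A f. rep_mat f A \<Longrightarrow> \<exists>g. (\<forall>x. eval f p [x] (g x)) \<and> rep_mat g (G A)"
    using assms(1) unfolding BT_computable_def by blast
  obtain g0 where g0: "\<And>x. eval f0 p [x] (g0 x)" "rep_mat g0 (G A0)"
    using p[OF rep0] by blast
  obtain g where g: "\<And>t x. eval (f t) p [x] (g t x)" "\<And>t. rep_mat (g t) (G (A t))"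
    using p[OF rep] by metis
  have "eventually (\<lambda>t. g t x = g0 x) F" for x
    using eval_continuous_in_oracle[OF g0(1) agree]
    by (rule eventually_mono) (use g(1) eval_deterministic in blast)
  with g(2) g0(2) show ?thesis by (rule rep_mat_tendsto)
qed

definition mat_unit :: "'r \<Rightarrow> 'c \<Rightarrow> complex \<Rightarrow> complex ^ 'c ^ 'r" where
  "mat_unit i0 j0 a = (\<chi> i j. if i = i0 \<and> j = j0 then a else 0)"

definition zero_tape :: "nat \<Rightarrow> nat" where
  "zero_tape x = (if fst (prod_decode x) = 1 then 1 else 0)"

(* The real part of entry (i,j) is written as 1/2^M at precisions k > M and as 0/1 at k <= M,
   which is already 2^-k-accurate. As the precision index of a tape position never exceeds the
   position, the tape agrees with zero_tape on all positions up to M. *)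
definition unit_tape :: "nat \<Rightarrow> 'r::countable \<Rightarrow> 'c::countable \<Rightarrow> nat \<Rightarrow> nat" where
  "unit_tape M i j x = (case prod_decode x of (c, r) \<Rightarrow> case prod_decode r of (k, e) \<Rightarrow>
     if e = prod_encode (prod_encode (to_nat i, to_nat j), 0) \<and> M < k
     then (if c = 0 then 1 else if c = 1 then 2 ^ M else 0) else zero_tape x)"

lemma zero_tape_pos: "zero_tape (tape_pos c k i j ri) = (if c = 1 then 1 else 0)"
  by (simp add: zero_tape_def tape_pos_def)

lemma unit_tape_pos: "unit_tape M i0 j0 (tape_pos c k i j ri) =
  (if i = i0 \<and> j = j0 \<and> ri = 0 \<and> M < k
   then (if c = 0 then 1 else if c = 1 then 2 ^ M else 0) else if c = 1 then 1 else 0)"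
  by (auto simp: unit_tape_def zero_tape_def tape_pos_def prod_encode_eq)

lemma eventually_unit_tape_eq_zero_tape:
  "eventually (\<lambda>M. unit_tape M i j x = zero_tape x) sequentially"
proof (rule eventually_sequentiallyI)
  fix M assume "x \<le> M"
  obtain c r k e where "prod_decode x = (c, r)" "prod_decode r = (k, e)"
    by (metis prod.collapse)
  moreover from this have "k \<le> x"
    by (metis le_prod_encode_1 le_prod_encode_2 order_trans prod_decode_inverse)
  ultimately show "unit_tape M i j x = zero_tape x"
    using \<open>x \<le> M\<close> by (simp add: unit_tape_def)
qed

lemma rep_real_zero: "rep_real (\<lambda>k. 0) (\<lambda>k. 1) (\<lambda>k. 0) 0"
  by (simp add: rep_real_def recursive_const)

lemma rep_real_half_power:
  "rep_real (\<lambda>k. if M < k then 1 else 0) (\<lambda>k. if M < k then 2 ^ M else 1) (\<lambda>k. 0) ((1 / 2) ^ M)"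
  unfolding rep_real_def two_powr_minus_nat
proof (intro conjI allI)
  fix k
  show "\<bar>(- 1) ^ 0 * real (if M < k then 1 else 0) / real (if M < k then 2 ^ M else 1) - (1 / 2) ^ M\<bar>
         \<le> (1 / 2) ^ k"
  proof (cases "M < k")
    case False
    then have "(1 / 2 :: real) ^ M \<le> (1 / 2) ^ k" by (intro power_decreasing) auto
    with False show ?thesis by simp
  qed (simp add: power_one_over)
qed (auto intro: recursive_step recursive_const)

lemma rep_mat_zero_tape: "rep_mat zero_tape (0 :: complex ^ 'c::finite ^ 'r::finite)"
  unfolding rep_mat_def zero_tape_pos using rep_real_zero by simp

lemma rep_mat_unit_tape:
  "rep_mat (unit_tape M i0 j0) (mat_unit i0 j0 (complex_of_real ((1 / 2) ^ M)) :: complex ^ 'c::finite ^ 'r::finite)"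
  unfolding rep_mat_def unit_tape_pos mat_unit_def
  using rep_real_half_power[of M] rep_real_zero by auto

lemma conj_transpose_mult: "conj_transpose (A ** B) = conj_transpose B ** conj_transpose A"
  by (simp add: vec_eq_iff conj_transpose_def matrix_matrix_mult_def mult.commute)

lemma moore_penrose_unique:
  fixes A :: "complex ^ 'n::finite ^ 'm::finite"
  assumes X1: "A ** X ** A = A" and X2: "X ** A ** X = X"
    and X3: "conj_transpose (A ** X) = A ** X" and X4: "conj_transpose (X ** A) = X ** A"
    and Y1: "A ** Y ** A = A" and Y2: "Y ** A ** Y = Y"
    and Y3: "conj_transpose (A ** Y) = A ** Y" and Y4: "conj_transpose (Y ** A) = Y ** A"
  shows "X = Y"
proof -
  let ?H = conj_transpose
  have HA_AY: "?H A = ?H A ** (A ** Y)"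
  proof -
    have "?H A = ?H ((A ** Y) ** A)" using Y1 by simp
    also have "\<dots> = ?H A ** ?H (A ** Y)" by (rule conj_transpose_mult)
    finally show ?thesis using Y3 by simp
  qed
  have XA_HA: "?H A = X ** A ** ?H A"
  proof -
    have "?H A = ?H (A ** (X ** A))" using X1 by (simp add: matrix_mul_assoc)
    also have "\<dots> = ?H (X ** A) ** ?H A" by (rule conj_transpose_mult)
    finally show ?thesis using X4 by simp
  qed
  have "X = X ** ?H (A ** X)" using X2 X3 by (simp add: matrix_mul_assoc)
  also have "\<dots> = X ** (?H X ** (?H A ** (A ** Y)))" using HA_AY by (simp add: conj_transpose_mult)
  also have "\<dots> = X ** A ** Y" using X2 X3 by (simp add: conj_transpose_mult matrix_mul_assoc)
  finally have X_eq: "X = X ** A ** Y" .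
  have "Y = ?H (Y ** A) ** Y" using Y2 Y4 by simp
  also have "\<dots> = X ** A ** ?H A ** ?H Y ** Y" using XA_HA by (simp add: conj_transpose_mult)
  also have "\<dots> = X ** A ** ?H (Y ** A) ** Y" by (simp add: conj_transpose_mult matrix_mul_assoc)
  also have "\<dots> = X ** A ** Y" using Y2 Y4 by (metis matrix_mul_assoc)
  finally show ?thesis using X_eq by simp
qed

lemma pinv_eqI:
  fixes A :: "complex ^ 'n::finite ^ 'm::finite"
  assumes "A ** X ** A = A" "X ** A ** X = X"
    "conj_transpose (A ** X) = A ** X" "conj_transpose (X ** A) = X ** A"
  shows "pinv A = X"
  unfolding pinv_def by (rule the_equality) (use assms moore_penrose_unique in blast)+

lemma mat_unit_mult: "mat_unit i j a ** mat_unit j k b = mat_unit i k (a * b)"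
  by (simp add: vec_eq_iff mat_unit_def matrix_matrix_mult_def if_distrib[of "\<lambda>x. x * _"]
      sum.delta cong: if_cong)

lemma conj_transpose_mat_unit: "conj_transpose (mat_unit i j a) = mat_unit j i (cnj a)"
  by (simp add: vec_eq_iff mat_unit_def conj_transpose_def)

lemma pinv_mat_unit:
  assumes "a \<noteq> 0"
  shows "pinv (mat_unit i j a :: complex ^ 'c::finite ^ 'r::finite) = mat_unit j i (inverse a)"
  using assms by (intro pinv_eqI) (simp_all add: mat_unit_mult conj_transpose_mat_unit)

lemma norm_entry_le_spec_norm: "norm (A $ i $ j) \<le> spec_norm (A :: complex ^ 'c::finite ^ 'r::finite)"
proof -
  have "axis j (1 :: complex) \<in> (Basis :: (complex ^ 'c) set)"
    by (auto simp: Basis_vec_def Basis_complex_def)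
  then have unit: "norm (axis j (1 :: complex)) = 1" by simp
  have "norm ((A *v axis j 1) $ i) \<le> norm (A *v axis j 1)"
    by (rule Finite_Cartesian_Product.norm_nth_le)
  also have "\<dots> \<le> onorm (\<lambda>x. A *v x) * norm (axis j (1 :: complex))"
    by (rule onorm) simp
  also have "\<dots> = spec_norm A"
    by (simp add: spec_norm_def unit)
  finally show ?thesis
    by (simp add: matrix_vector_mult_def axis_def if_distrib cong: if_cong)
qed

lemma Bseq_far_from_pinv_mat_unit:
  fixes X :: "nat \<Rightarrow> complex ^ 'r::finite ^ 'c::finite"
  assumes "Bseq X"
  obtains M where "1 < spec_norm (pinv (mat_unit i j (complex_of_real ((1 / 2) ^ M))) - X M)"
proof -
  from assms obtain K where K: "\<And>M. norm (X M) \<le> K" using BseqE by metis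
  obtain M where M: "K + 1 < 2 ^ M" using real_arch_pow[of 2 "K + 1"] by auto
  define D where "D = pinv (mat_unit i j (complex_of_real ((1 / 2) ^ M))) - X M"
  have "norm (X M $ j $ i) \<le> K"
    using K[of M] Finite_Cartesian_Product.norm_nth_le[of "X M $ j" i]
      Finite_Cartesian_Product.norm_nth_le[of "X M" j] by linarith
  moreover have "pinv (mat_unit i j (complex_of_real ((1 / 2) ^ M))) = mat_unit j i (2 ^ M)"
    by (simp add: pinv_mat_unit power_one_over)
  then have "D $ j $ i = 2 ^ M - X M $ j $ i"
    by (simp add: D_def mat_unit_def)
  then have "norm (2 ^ M - X M $ j $ i) \<le> spec_norm D"
    by (metis norm_entry_le_spec_norm)
  moreover have "norm (2 ^ M :: complex) = 2 ^ M"
    by (simp add: norm_power)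
  ultimately have "2 ^ M - K \<le> spec_norm D"
    using norm_triangle_ineq2[of "2 ^ M" "X M $ j $ i"] by linarith
  with M have "1 < spec_norm D" by linarith
  then show ?thesis unfolding D_def by (rule that)
qed

lemma tendsto_matrix_mult:
  fixes X :: "'t \<Rightarrow> complex ^ 'n::finite ^ 'm::finite" and Y :: "'t \<Rightarrow> complex ^ 'k::finite ^ 'n"
  assumes "(X \<longlongrightarrow> A) F" and "(Y \<longlongrightarrow> B) F"
  shows "((\<lambda>t. X t ** Y t) \<longlongrightarrow> A ** B) F"
  unfolding matrix_matrix_mult_def by (intro tendsto_intros assms)

lemma tendsto_newton_iter:
  assumes "(A \<longlongrightarrow> A0) F" and "(X \<longlongrightarrow> X0) F"
  shows "((\<lambda>t. newton_iter (A t) (X t) k) \<longlongrightarrow> newton_iter A0 X0 k) F"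
proof (induction k)
  case 0
  show ?case using assms(2) by (simp add: newton_iter_def)
next
  case (Suc k)
  then show ?case
    unfolding newton_iter_def funpow.simps o_apply
    by (intro tendsto_diff tendsto_add tendsto_matrix_mult assms(1)) (simp_all add: newton_iter_def)
qed

lemma tendsto_mat_unit:
  assumes "(a \<longlongrightarrow> a0) F"
  shows "((\<lambda>t. mat_unit i j (a t)) \<longlongrightarrow> mat_unit i j a0) F"
  unfolding mat_unit_def by (intro tendsto_vec_lambda) (auto simp: assms)

theorem corollary3p5:
  assumes "CARD('m::finite) \<ge> 2" and "CARD('n::finite) \<ge> 2"
  shows "\<not> (\<exists>G :: complex ^ 'n ^ 'm \<Rightarrow> complex ^ 'm ^ 'n.
            BT_computable G \<and>
            (\<exists>e. recursive e \<and>
               (\<forall>A :: complex ^ 'n ^ 'm. computable_mat A \<longrightarrow>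
                  (\<forall>N k. k \<ge> e N \<longrightarrow>
                     spec_norm (pinv A - newton_iter A (G A) k) \<le> 2 powr (- real N)))))"
proof (intro notI, elim exE conjE)
  fix G :: "complex ^ 'n ^ 'm \<Rightarrow> complex ^ 'm ^ 'n" and e :: "nat \<Rightarrow> nat"
  assume G: "BT_computable G" and "recursive e"
    and approx: "\<forall>A :: complex ^ 'n ^ 'm. computable_mat A \<longrightarrow>
      (\<forall>N k. k \<ge> e N \<longrightarrow> spec_norm (pinv A - newton_iter A (G A) k) \<le> 2 powr (- real N))"
  fix i :: 'm and j :: 'n
  define A where "A M = mat_unit i j (complex_of_real ((1 / 2) ^ M))" for M
  have "(\<lambda>M. (1 / 2 :: real) ^ M) \<longlonglongrightarrow> 0"
    by (rule LIMSEQ_realpow_zero) simp_all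
  then have "A \<longlonglongrightarrow> mat_unit i j (complex_of_real 0)"
    unfolding A_def by (intro tendsto_mat_unit tendsto_of_real)
  moreover have "(\<lambda>M. G (A M)) \<longlonglongrightarrow> G 0"
    using G rep_mat_unit_tape rep_mat_zero_tape eventually_unit_tape_eq_zero_tape
    unfolding A_def by (rule BT_computable_tendsto)
  ultimately have "(\<lambda>M. newton_iter (A M) (G (A M)) (e 0)) \<longlonglongrightarrow>
      newton_iter (mat_unit i j (complex_of_real 0)) (G 0) (e 0)"
    by (rule tendsto_newton_iter)
  then have "Bseq (\<lambda>M. newton_iter (A M) (G (A M)) (e 0))"
    by (rule convergent_imp_Bseq[OF convergentI])
  then obtain M where "1 < spec_norm (pinv (A M) - newton_iter (A M) (G (A M)) (e 0))"
    unfolding A_def by (rule Bseq_far_from_pinv_mat_unit)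
  moreover have "computable_mat (A M)"
    unfolding computable_mat_def A_def using rep_mat_unit_tape by blast
  ultimately show False using approx[rule_format, of "A M" 0 "e 0"] by simp
qed

end
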